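(* Let $n\ge1$ and let $z_1,\dots,z_n$ be indeterminates. For all integers $m,k\ge0$, \[ \mathrm{monomial}_2(m,k,n)=e_m e_{m+k}+\sum_{i=1}^{m}(-1)^i\,\frac{k+2i}{i}\binom{k+i-1}{i-1}\,e_{m-i}\,e_{m+k+i}. \]
   Context: $e_r$ is the elementary symmetric polynomial of degree $r$ in $z_1,\dots,z_n$, with $e_0=1$ and $e_r=0$ for $r>n$. For integers $m_2,m_1\ge0$, $\mathrm{monomial}_2(m_2,m_1,n)$ is the monomial symmetric polynomial $\sum z^\alpha$ over all exponent vectors $\alpha\in\{0,1,2\}^n$ having exactly $m_2$ entries equal to $2$ and exactly $m_1$ entries equal to $1$. *)

theory Defs
  imports Main "HOL-Library.FuncSet"
begin

text \<open>Elementary symmetric polynomial of degree r in z_1..z_n, evaluated at z.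
  Empty sum for r > n, so e_r = 0 there; e_0 = 1.\<close>
definition esym :: "nat \<Rightarrow> nat \<Rightarrow> (nat \<Rightarrow> 'a::comm_ring_1) \<Rightarrow> 'a" where
  "esym n r z = (\<Sum>S\<in>{S. S \<subseteq> {1..n} \<and> card S = r}. \<Prod>i\<in>S. z i)"

definition monomial2 :: "nat \<Rightarrow> nat \<Rightarrow> nat \<Rightarrow> (nat \<Rightarrow> 'a::comm_ring_1) \<Rightarrow> 'a" where
  "monomial2 m2 m1 n z =
     (\<Sum>\<alpha>\<in>{\<alpha>. \<alpha> \<in> {1..n} \<rightarrow>\<^sub>E {0,1,2::nat}
              \<and> card {i\<in>{1..n}. \<alpha> i = 2} = m2 \<and> card {i\<in>{1..n}. \<alpha> i = 1} = m1}.
        \<Prod>i\<in>{1..n}. z i ^ \<alpha> i)"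

end

theory Submission
  imports Defs
begin

text \<open>
  Both sides depend only on the finite index set, so we induct over it. Adjoining a variable x
  multiplies the generating series of the e_r by 1 + x t, i.e. replaces e_r by e_r + x e_(r-1),
  and turns monomial_2(m,k) into monomial_2(m,k) + x monomial_2(m,k-1) + x^2 monomial_2(m-1,k).
  The right-hand side is a quadratic form Q(m,k) = sum_i c(k,i) e_(m-i) e_(m+k+i) in the e_r.
  Under the substitution its x^2-part is plainly Q(m-1,k), and its x-part telescopes to Q(m,k-1)
  (to 0 when k = 0) thanks to the Pascal-type recurrence c(k+1,i) + c(k+1,i+1) = c(k,i+1).
  So both sides satisfy the same recurrence, and they agree for the empty index set.
\<close>

definition elem_sym :: "'i set \<Rightarrow> nat \<Rightarrow> ('i \<Rightarrow> 'a::comm_ring_1) \<Rightarrow> 'a" where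
  "elem_sym A r z = (\<Sum>S | S \<subseteq> A \<and> card S = r. \<Prod>i\<in>S. z i)"

lemma elem_sym_empty: "elem_sym {} r z = (if r = 0 then 1 else 0)"
proof -
  have "{S. S \<subseteq> {} \<and> card S = r} = (if r = 0 then {{}} else {})"
    by auto
  show ?thesis
    unfolding elem_sym_def \<open>{S. S \<subseteq> {} \<and> card S = r} = _\<close> by simp
qed

lemma elem_sym_0 [simp]:
  assumes "finite A"
  shows "elem_sym A 0 z = 1"
proof -
  have "{S. S \<subseteq> A \<and> card S = 0} = {{}}"
    using assms by (auto dest: finite_subset)
  then show ?thesis
    by (simp add: elem_sym_def)
qed

lemma elem_sym_insert_Suc:
  assumes "finite A" "x \<notin> A"
  shows "elem_sym (insert x A) (Suc r) z = elem_sym A (Suc r) z + z x * elem_sym A r z"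
proof -
  let ?sub = "\<lambda>r. {S. S \<subseteq> A \<and> card S = r}"
  have subsets_insert: "{S. S \<subseteq> insert x A \<and> card S = Suc r} = ?sub (Suc r) \<union> insert x ` ?sub r"
  proof (intro equalityI subsetI)
    fix S
    assume S: "S \<in> {S. S \<subseteq> insert x A \<and> card S = Suc r}"
    then have "finite S"
      using assms(1) finite_subset by auto
    with S show "S \<in> ?sub (Suc r) \<union> insert x ` ?sub r"
      by (cases "x \<in> S") (auto intro!: image_eqI[of _ _ "S - {x}"])
  qed (use assms in \<open>auto simp: card_insert_if finite_subset\<close>)
  have inj: "inj_on (insert x) (?sub r)"
    using assms(2) by (intro inj_onI) (metis insert_ident mem_Collect_eq subset_iff)
  have "(\<Sum>S\<in>insert x ` ?sub r. \<Prod>i\<in>S. z i) = z x * elem_sym A r z"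
    using assms by (auto simp: sum.reindex[OF inj] elem_sym_def sum_distrib_left
                         intro!: sum.cong prod.insert intro: finite_subset)
  moreover have "?sub (Suc r) \<inter> insert x ` ?sub r = {}"
    using assms(2) by auto
  ultimately show ?thesis
    using assms(1) by (simp add: elem_sym_def subsets_insert sum.union_disjoint)
qed

definition monomial2_on :: "'i set \<Rightarrow> nat \<Rightarrow> nat \<Rightarrow> ('i \<Rightarrow> 'a::comm_ring_1) \<Rightarrow> 'a" where
  "monomial2_on A a b z =
     (\<Sum>\<alpha> | \<alpha> \<in> A \<rightarrow>\<^sub>E {0,1,2::nat}
              \<and> card {i\<in>A. \<alpha> i = 2} = a \<and> card {i\<in>A. \<alpha> i = 1} = b.
        \<Prod>i\<in>A. z i ^ \<alpha> i)"

lemma monomial2_on_altdef: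
  assumes "finite A"
  shows "monomial2_on A a b z =
           (\<Sum>\<alpha>\<in>A \<rightarrow>\<^sub>E {0,1,2::nat}.
              if card {i\<in>A. \<alpha> i = 2} = a \<and> card {i\<in>A. \<alpha> i = 1} = b
              then \<Prod>i\<in>A. z i ^ \<alpha> i else 0)"
  unfolding monomial2_on_def using assms
  by (subst sum.inter_filter[symmetric]) (auto intro: finite_PiE)

lemma monomial2_on_empty: "monomial2_on {} a b z = (if a = 0 \<and> b = 0 then 1 else 0)"
  by (simp add: monomial2_on_altdef)

lemma sum_PiE_insert:
  assumes "x \<notin> A"
  shows "(\<Sum>\<alpha>\<in>insert x A \<rightarrow>\<^sub>E B. f \<alpha>) = (\<Sum>y\<in>B. \<Sum>g\<in>A \<rightarrow>\<^sub>E B. f (g(x := y)))"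
proof -
  have "(\<Sum>\<alpha>\<in>insert x A \<rightarrow>\<^sub>E B. f \<alpha>) = (\<Sum>(y, g)\<in>B \<times> (A \<rightarrow>\<^sub>E B). f (g(x := y)))"
    unfolding PiE_insert_eq
    using inj_combinator[OF assms, of "\<lambda>_. B"] by (simp add: sum.reindex case_prod_unfold)
  then show ?thesis
    by (simp add: sum.cartesian_product)
qed

lemma monomial2_on_insert:
  fixes A :: "'i set" and z :: "'i \<Rightarrow> 'a::comm_ring_1"
  assumes "finite A" "x \<notin> A"
  shows "monomial2_on (insert x A) a b z =
           monomial2_on A a b z
           + (if b = 0 then 0 else z x * monomial2_on A a (b - 1) z)
           + (if a = 0 then 0 else z x ^ 2 * monomial2_on A (a - 1) b z)"
proof -
  have count: "card {i\<in>insert x A. (g(x := y)) i = v}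
                 = card {i\<in>A. g i = v} + (if y = v then 1 else 0)"
    for g :: "'i \<Rightarrow> nat" and y v
  proof -
    have "{i\<in>insert x A. (g(x := y)) i = v} =
            (if y = v then insert x {i\<in>A. g i = v} else {i\<in>A. g i = v})"
      using assms(2) by auto
    then show ?thesis
      using assms by simp
  qed
  have prod: "(\<Prod>i\<in>insert x A. z i ^ (g(x := y)) i) = z x ^ y * (\<Prod>i\<in>A. z i ^ g i)"
    for g :: "'i \<Rightarrow> nat" and y
  proof -
    have "(\<Prod>i\<in>A. z i ^ (g(x := y)) i) = (\<Prod>i\<in>A. z i ^ g i)"
      using assms(2) by (intro prod.cong) auto
    then show ?thesis
      using assms by simp
  qed
  let ?P = "\<lambda>g. \<Prod>i\<in>A. z i ^ g i"
  let ?c = "\<lambda>v g. card {i\<in>A. g i = (v::nat)}"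
  have "monomial2_on (insert x A) a b z =
          (\<Sum>y\<in>{0,1,2}. \<Sum>g\<in>A \<rightarrow>\<^sub>E {0,1,2}.
             if ?c 2 g + (if y = 2 then 1 else 0) = a \<and> ?c 1 g + (if y = 1 then 1 else 0) = b
             then z x ^ y * ?P g else 0)"
    unfolding monomial2_on_altdef[OF finite.insertI[OF assms(1)]] sum_PiE_insert[OF assms(2)]
      count prod ..
  also have "\<dots> = (\<Sum>g\<in>A \<rightarrow>\<^sub>E {0,1,2}. if ?c 2 g = a \<and> ?c 1 g = b then ?P g else 0)
      + (\<Sum>g\<in>A \<rightarrow>\<^sub>E {0,1,2}. if ?c 2 g = a \<and> Suc (?c 1 g) = b then z x * ?P g else 0)
      + (\<Sum>g\<in>A \<rightarrow>\<^sub>E {0,1,2}. if Suc (?c 2 g) = a \<and> ?c 1 g = b then z x ^ 2 * ?P g else 0)"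
    by (simp add: add.assoc cong: if_cong)
  also have "\<dots> = monomial2_on A a b z
           + (if b = 0 then 0 else z x * monomial2_on A a (b - 1) z)
           + (if a = 0 then 0 else z x ^ 2 * monomial2_on A (a - 1) b z)"
    using assms(1)
    by (cases a; cases b)
       (simp_all add: monomial2_on_altdef sum_distrib_left if_distrib cong: if_cong)
  finally show ?thesis .
qed

text \<open>The coefficient c(k,i), in integral form so that the expansion holds over any commutative
  ring; \<open>mono2_coeff_closed_form\<close> recovers the one in the theorem.\<close>

fun mono2_coeff :: "nat \<Rightarrow> nat \<Rightarrow> 'a::comm_ring_1" where
  "mono2_coeff k 0 = 1"
| "mono2_coeff k (Suc j) = (-1) ^ Suc j * of_nat ((k + Suc j choose Suc j) + (k + j choose j))"

lemma mono2_coeff_Suc_add: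
  "mono2_coeff (Suc k) i + mono2_coeff (Suc k) (Suc i) = (mono2_coeff k (Suc i) :: 'a::comm_ring_1)"
  by (cases i) (simp_all add: algebra_simps)

lemma mono2_coeff_0_add:
  "mono2_coeff 0 i + mono2_coeff 0 (Suc i) = (if i = 0 then -1 else 0 :: 'a::comm_ring_1)"
  by (cases i) simp_all

lemma mono2_coeff_closed_form:
  assumes "i > 0"
  shows "(mono2_coeff k i :: 'a::field_char_0)
           = (-1) ^ i * (of_nat (k + 2 * i) / of_nat i) * of_nat ((k + i - 1) choose (i - 1))"
proof -
  obtain j where i: "i = Suc j"
    using assms gr0_implies_Suc by blast
  let ?b = "(k + Suc j choose Suc j) + (k + j choose j)"
  have "Suc j * ?b = (k + 2 * Suc j) * (k + j choose j)"
    using Suc_times_binomial[of j "k + j"] by (simp add: algebra_simps)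
  then have "of_nat (Suc j) * (of_nat ?b :: 'a) = of_nat (k + 2 * Suc j) * of_nat (k + j choose j)"
    by (metis of_nat_mult)
  then have "(of_nat ?b :: 'a) = of_nat (k + 2 * Suc j) / of_nat (Suc j) * of_nat (k + j choose j)"
    by (simp add: field_simps del: of_nat_Suc of_nat_add)
  then show ?thesis
    using i by simp
qed

definition seq_shift :: "(nat \<Rightarrow> 'a::zero) \<Rightarrow> nat \<Rightarrow> 'a" where
  "seq_shift e r = (case r of 0 \<Rightarrow> 0 | Suc r' \<Rightarrow> e r')"

lemma seq_shift_0 [simp]: "seq_shift e 0 = 0"
  and seq_shift_Suc [simp]: "seq_shift e (Suc r) = e r"
  by (simp_all add: seq_shift_def)

definition mono2_form :: "(nat \<Rightarrow> 'a::comm_ring_1) \<Rightarrow> (nat \<Rightarrow> 'a) \<Rightarrow> nat \<Rightarrow> nat \<Rightarrow> 'a" where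
  "mono2_form e f m k = (\<Sum>i\<le>m. mono2_coeff k i * e (m - i) * f (m + k + i))"

lemma mono2_form_add_scaled:
  "mono2_form (\<lambda>r. e r + t * e' r) (\<lambda>r. f r + t * f' r) m k
     = mono2_form e f m k + t * (mono2_form e' f m k + mono2_form e f' m k)
       + t ^ 2 * mono2_form e' f' m k"
  by (simp add: mono2_form_def algebra_simps power2_eq_square sum.distrib sum_distrib_left)

lemma mono2_form_shift_shift:
  "mono2_form (seq_shift e) (seq_shift f) m k = (if m = 0 then 0 else mono2_form e f (m - 1) k)"
proof (cases m)
  case (Suc m')
  have "mono2_form (seq_shift e) (seq_shift f) m k
          = (\<Sum>i\<le>m'. mono2_coeff k i * seq_shift e (Suc m' - i) * seq_shift f (Suc (m' + k + i)))"
    by (simp add: mono2_form_def Suc)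
  also have "\<dots> = mono2_form e f m' k"
    unfolding mono2_form_def by (intro sum.cong) (simp_all add: Suc_diff_le)
  finally show ?thesis
    using Suc by simp
qed (simp add: mono2_form_def)

lemma mono2_form_shift_sym:
  "mono2_form (seq_shift e) e m k + mono2_form e (seq_shift e) m k
     = (if k = 0 then 0 else mono2_form e e m (k - 1))"
proof (cases m)
  case 0
  then show ?thesis
    by (cases k) (simp_all add: mono2_form_def)
next
  case (Suc m')
  define f where "f i = e (m' - i) * e (Suc (m' + k + i))" for i
  have left: "mono2_form (seq_shift e) e m k = (\<Sum>i\<le>m'. mono2_coeff k i * f i)"
    unfolding mono2_form_def Suc sum.atMost_Suc
    by (auto simp: f_def Suc_diff_le mult.assoc intro!: sum.cong)
  have right: "mono2_form e (seq_shift e) m k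
                 = e m * e (m' + k) + (\<Sum>i\<le>m'. mono2_coeff k (Suc i) * f i)"
    unfolding mono2_form_def Suc sum.atMost_Suc_shift by (simp add: f_def mult.assoc)
  have sum: "mono2_form (seq_shift e) e m k + mono2_form e (seq_shift e) m k
               = e m * e (m' + k) + (\<Sum>i\<le>m'. (mono2_coeff k i + mono2_coeff k (Suc i)) * f i)"
    unfolding left right by (simp add: distrib_right sum.distrib add_ac del: mono2_coeff.simps)
  show ?thesis
  proof (cases k)
    case 0
    have "(\<Sum>i\<le>m'. (mono2_coeff 0 i + mono2_coeff 0 (Suc i)) * f i)
            = (\<Sum>i\<le>m'. if i = 0 then - f 0 else 0)"
      by (intro sum.cong) (simp_all only: mono2_coeff_0_add refl, simp)
    with sum show ?thesis
      by (simp add: f_def Suc 0 del: mono2_coeff.simps)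
  next
    case (Suc k')
    have "mono2_form e e m k' = e m * e (m' + k) + (\<Sum>i\<le>m'. mono2_coeff k' (Suc i) * f i)"
      unfolding mono2_form_def \<open>m = Suc m'\<close> sum.atMost_Suc_shift
      by (simp add: f_def Suc mult.assoc)
    with sum show ?thesis
      by (simp add: Suc mono2_coeff_Suc_add del: mono2_coeff.simps)
  qed
qed

lemma monomial2_on_eq_mono2_form:
  assumes "finite A"
  shows "monomial2_on A m k z = mono2_form (\<lambda>r. elem_sym A r z) (\<lambda>r. elem_sym A r z) m k"
  using assms
proof (induction A arbitrary: m k rule: finite_induct)
  case empty
  show ?case
    by (cases m) (auto simp: monomial2_on_empty mono2_form_def elem_sym_empty)
next
  case (insert x A)
  define e where "e = (\<lambda>r. elem_sym A r z)"
  have "(\<lambda>r. elem_sym (insert x A) r z) = (\<lambda>r. e r + z x * seq_shift e r)"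
  proof
    show "elem_sym (insert x A) r z = e r + z x * seq_shift e r" for r
      using insert.hyps by (cases r) (simp_all add: e_def elem_sym_insert_Suc)
  qed
  then have "mono2_form (\<lambda>r. elem_sym (insert x A) r z) (\<lambda>r. elem_sym (insert x A) r z) m k
      = mono2_form e e m k + z x * (mono2_form (seq_shift e) e m k + mono2_form e (seq_shift e) m k)
        + z x ^ 2 * mono2_form (seq_shift e) (seq_shift e) m k"
    by (simp add: mono2_form_add_scaled)
  also have "\<dots> = monomial2_on (insert x A) m k z"
    by (simp add: mono2_form_shift_sym mono2_form_shift_shift monomial2_on_insert insert.hyps
                  insert.IH[folded e_def])
  finally show ?case ..
qed

theorem lemma3p3:
  fixes z :: "nat \<Rightarrow> 'a::field_char_0" and n m k :: nat
  assumes "n \<ge> 1"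
  shows "monomial2 m k n z =
           esym n m z * esym n (m + k) z
           + (\<Sum>i=1..m. (-1) ^ i * (of_nat (k + 2 * i) / of_nat i)
                 * of_nat ((k + i - 1) choose (i - 1))
                 * esym n (m - i) z * esym n (m + k + i) z)"
proof -
  have esym: "esym n r z = elem_sym {1..n} r z" for r
    unfolding esym_def elem_sym_def ..
  have "monomial2 m k n z = monomial2_on {1..n} m k z"
    unfolding monomial2_def monomial2_on_def ..
  also have "\<dots> = mono2_form (\<lambda>r. esym n r z) (\<lambda>r. esym n r z) m k"
    by (simp add: monomial2_on_eq_mono2_form esym)
  also have "\<dots> = esym n m z * esym n (m + k) z
      + (\<Sum>i<m. mono2_coeff k (Suc i) * esym n (m - Suc i) z * esym n (m + k + Suc i) z)"
    unfolding mono2_form_def sum.atMost_shift by simp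
  also have "(\<Sum>i<m. mono2_coeff k (Suc i) * esym n (m - Suc i) z * esym n (m + k + Suc i) z)
      = (\<Sum>i=1..m. (-1) ^ i * (of_nat (k + 2 * i) / of_nat i)
                 * of_nat ((k + i - 1) choose (i - 1))
                 * esym n (m - i) z * esym n (m + k + i) z)"
    unfolding sum.atLeast1_atMost_eq[folded One_nat_def]
    by (simp only: mono2_coeff_closed_form zero_less_Suc)
  finally show ?thesis .
qed

end
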